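(* For every $s>0$, $H^s(\mathbb{Z}_2)=A^s(\mathbb{Z}_2)$.
   Context: $\mathbb{Z}_2$ is the ring of 2-adic integers with 2-adic absolute value $|\cdot|_2$ and Haar probability measure $\mu$. $\Lambda=\mathbb{Q}_2/\mathbb{Z}_2$; for $f\in L^2(\mathbb{Z}_2)$, $\mathcal F(f)(\lambda)=\int_{\mathbb{Z}_2}e^{-2i\pi\lambda x}f(x)\,d\mu(x)$; $H^s(\mathbb{Z}_2)$ is the completion of the locally constant functions on $\mathbb{Z}_2$ for the norm $\|f\|_{H^s(\mathbb{Z}_2)}=\big(\sum_{\lambda\in\Lambda}(1+|\lambda|_2)^{2s}|\mathcal F(f)(\lambda)|^2\big)^{1/2}$ (for $s>0$ a subspace of $L^2(\mathbb{Z}_2)$). For $n\in\mathbb{N}$, $V_n$ is the span in $L^2(\mathbb{Z}_2)$ of ${\bf 1}_{\mathbb{Z}_2}$ and the indicators ${\bf 1}_{k+2^j\mathbb{Z}_2}$ for $j\le n$, $k\in\mathbb{Z}$; $P_n$ is the $L^2(\mathbb{Z}_2)$-orthogonal projection onto $V_n$. $A^s(\mathbb{Z}_2)=\{f\in L^2(\mathbb{Z}_2):\sum_{n\ge0}\|f-P_nf\|_{L^2(\mathbb{Z}_2)}^2 2^{2ns}<\infty\}$, with norm $\|P_0f\|_{L^2}+\big(\sum_{n\ge0}\|f-P_nf\|_{L^2}^22^{2ns}\big)^{1/2}$. *)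

theory Defs
  imports "HOL-Probability.Probability"
begin

text \<open>The 2-adic integers are modelled by their binary digit sequences:
  x = sum_i (if x i then 2^i else 0).  The topology is the product topology on
  nat => bool (bool discrete), which is the 2-adic topology.\<close>
type_synonym Z2 = "nat \<Rightarrow> bool"

text \<open>Haar probability measure on Z2: the digits are independent fair coins.\<close>
definition haar2 :: "Z2 measure" where
  "haar2 = PiM UNIV (\<lambda>_. measure_pmf (bernoulli_pmf (1/2)))"

text \<open>x mod 2^j, as an integer in {0..<2^j}\<close>
definition trunc2 :: "Z2 \<Rightarrow> nat \<Rightarrow> int" where
  "trunc2 x j = (\<Sum>i<j. if x i then 2^i else 0)"

text \<open>L^2(Z2) (as a set of representatives) and its norm\<close>
definition L2 :: "(Z2 \<Rightarrow> complex) set" where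
  "L2 = {f. f \<in> borel_measurable haar2 \<and> integrable haar2 (\<lambda>x. (cmod (f x))^2)}"

definition L2norm :: "(Z2 \<Rightarrow> complex) \<Rightarrow> real" where
  "L2norm f = sqrt (integral\<^sup>L haar2 (\<lambda>x. (cmod (f x))^2))"

text \<open>Lambda = Q2/Z2, represented by the dyadic rationals in [0,1)\<close>
definition Lam :: "rat set" where
  "Lam = {q. 0 \<le> q \<and> q < 1 \<and> (\<exists>m::nat. q * 2^m \<in> \<int>)}"

definition dexp :: "rat \<Rightarrow> nat" where
  "dexp q = (LEAST m::nat. q * 2^m \<in> \<int>)"

definition abs2 :: "rat \<Rightarrow> real" where
  "abs2 q = (if q = 0 then 0 else 2 ^ dexp q)"

text \<open>the character x |-> exp(-2 i pi lambda x); lambda x mod 1 = q * (x mod 2^m)\<close>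
definition chr :: "rat \<Rightarrow> Z2 \<Rightarrow> complex" where
  "chr q x = cis (- 2 * pi * real_of_rat q * real_of_int (trunc2 x (dexp q)))"

definition fourier :: "(Z2 \<Rightarrow> complex) \<Rightarrow> rat \<Rightarrow> complex" where
  "fourier f q = integral\<^sup>L haar2 (\<lambda>x. chr q x * f x)"

definition Hs_norm :: "real \<Rightarrow> (Z2 \<Rightarrow> complex) \<Rightarrow> real" where
  "Hs_norm s f = sqrt (infsum (\<lambda>q. (1 + abs2 q) powr (2 * s) * (cmod (fourier f q))^2) Lam)"

definition locally_constant :: "(Z2 \<Rightarrow> complex) \<Rightarrow> bool" where
  "locally_constant f \<longleftrightarrow> (\<forall>x. \<exists>U. open U \<and> x \<in> U \<and> (\<forall>y\<in>U. f y = f x))"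

text \<open>H^s(Z2), s > 0: the completion of the locally constant functions for the
  H^s norm, realised inside L^2: limits in L^2 of H^s-Cauchy sequences of locally
  constant functions.\<close>
definition Hs :: "real \<Rightarrow> (Z2 \<Rightarrow> complex) set" where
  "Hs s = {f \<in> L2. \<exists>g :: nat \<Rightarrow> Z2 \<Rightarrow> complex.
      (\<forall>n. locally_constant (g n)) \<and>
      (\<forall>e>0. \<exists>N. \<forall>m\<ge>N. \<forall>n\<ge>N. Hs_norm s (\<lambda>x. g m x - g n x) < e) \<and>
      (\<lambda>n. L2norm (\<lambda>x. g n x - f x)) \<longlonglongrightarrow> 0}"

text \<open>generators of V_n: the constant 1 and the indicators of k + 2^j Z2, j \<le> n, k \<in> Z\<close>
definition Vgens :: "nat \<Rightarrow> (Z2 \<Rightarrow> complex) set" where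
  "Vgens n = insert (\<lambda>x. 1)
     {(\<lambda>x. if trunc2 x j = k mod 2^j then 1 else 0) | j k. j \<le> n \<and> (k::int) \<in> UNIV}"

definition V :: "nat \<Rightarrow> (Z2 \<Rightarrow> complex) set" where
  "V n = {g. \<exists>S c. finite S \<and> S \<subseteq> Vgens n \<and> g = (\<lambda>x. \<Sum>h\<in>S. c h * h x)}"

definition P :: "nat \<Rightarrow> (Z2 \<Rightarrow> complex) \<Rightarrow> (Z2 \<Rightarrow> complex)" where
  "P n f = (SOME g. g \<in> V n \<and>
      (\<forall>h\<in>V n. integral\<^sup>L haar2 (\<lambda>x. (f x - g x) * cnj (h x)) = 0))"

definition As :: "real \<Rightarrow> (Z2 \<Rightarrow> complex) set" where
  "As s = {f \<in> L2. summable (\<lambda>n. (L2norm (\<lambda>x. f x - P n f x))^2 * 2 powr (2 * real n * s))}"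

end

theory Submission
  imports Defs
begin

text \<open>
  The projection \<open>P n\<close> is the average over the cylinders \<open>k + 2^n Z\<^sub>2\<close>. A character of
  exponent \<open>d\<close> (i.e. \<open>|\<lambda>|\<^sub>2 = 2^d\<close>) is constant on cylinders of level \<open>d\<close> and averages to
  zero on those of level \<open>d - 1\<close>, so \<open>f - P n f\<close> keeps exactly the Fourier coefficients of
  exponent greater than \<open>n\<close>. For a function of finite level, Parseval's identity (a finite DFT
  computation) turns \<open>\<Sum>n. 2^(2ns) \<cdot> \<parallel>f - P n f\<parallel>^2\<close> into
  \<open>\<Sum>\<lambda>. (\<Sum>n < d(\<lambda>). 2^(2ns)) \<cdot> |fourier f \<lambda>|^2\<close>, and the geometric inner sum is comparable to
  \<open>(1 + |\<lambda>|\<^sub>2)^(2s)\<close> for \<open>\<lambda> \<noteq> 0\<close>. By compactness the locally constant functions are exactly the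
  functions of finite level, so on them the two norms are equivalent up to the mean. For
  \<open>f \<in> A^s\<close> the averages \<open>P n f\<close> are then \<open>H^s\<close>-Cauchy and converge to \<open>f\<close> in \<open>L^2\<close>; for
  \<open>f \<in> H^s\<close> the partial sums of the \<open>A^s\<close> series are bounded uniformly along an approximating
  sequence.
\<close>

section \<open>Cylinders and the Haar measure\<close>

lemma trunc2_0 [simp]: "trunc2 x 0 = 0"
  by (simp add: trunc2_def)

lemma trunc2_Suc: "trunc2 x (Suc n) = trunc2 x n + (if x n then 2^n else 0)"
  by (simp add: trunc2_def)

lemma trunc2_bounds: "0 \<le> trunc2 x n" "trunc2 x n < 2^n"
  by (induction n) (auto simp: trunc2_Suc)

lemma trunc2_eq_iff: "trunc2 x n = trunc2 y n \<longleftrightarrow> (\<forall>i<n. x i = y i)"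
proof (induction n)
  case (Suc n)
  have "trunc2 x (Suc n) = trunc2 y (Suc n) \<longleftrightarrow> trunc2 x n = trunc2 y n \<and> x n = y n"
    using trunc2_bounds[of x n] trunc2_bounds[of y n]
    by (cases "x n"; cases "y n") (auto simp: trunc2_Suc)
  with Suc show ?case
    by (auto simp: less_Suc_eq)
qed simp

lemma trunc2_eq_mono: "trunc2 x m = trunc2 y m \<Longrightarrow> n \<le> m \<Longrightarrow> trunc2 x n = trunc2 y n"
  by (auto simp: trunc2_eq_iff)

definition digits_of :: "int \<Rightarrow> Z2" where
  "digits_of k = (\<lambda>i. bit k i)"

lemma trunc2_digits_of: "trunc2 (digits_of k) n = take_bit n k"
  by (induction n) (auto simp: trunc2_Suc digits_of_def take_bit_Suc_from_most)

lemma trunc2_digits_of_eq: "0 \<le> k \<Longrightarrow> k < 2^n \<Longrightarrow> trunc2 (digits_of k) n = k"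
  by (simp add: trunc2_digits_of take_bit_int_eq_self)

definition cyl :: "nat \<Rightarrow> int \<Rightarrow> Z2 set" where
  "cyl n k = {x. trunc2 x n = k}"

abbreviation cyl_ind :: "nat \<Rightarrow> int \<Rightarrow> Z2 \<Rightarrow> complex" where
  "cyl_ind n k \<equiv> indicator (cyl n k)"

lemma cyl_ind_split:
  assumes "0 \<le> k" "k < 2^n"
  shows "cyl_ind n k x = cyl_ind (Suc n) k x + cyl_ind (Suc n) (k + 2^n) x"
  using assms trunc2_bounds[of x n] by (auto simp: indicator_def cyl_def trunc2_Suc)

abbreviation coin :: "nat \<Rightarrow> bool measure" where
  "coin \<equiv> (\<lambda>_. measure_pmf (bernoulli_pmf (1/2)))"

interpretation coins: product_prob_space coin UNIV
  by unfold_locales (simp add: prob_space_measure_pmf)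

lemma prob_space_haar2: "prob_space haar2"
  unfolding haar2_def by (intro prob_space_PiM) (simp add: prob_space_measure_pmf)

lemma space_haar2 [simp]: "space haar2 = UNIV"
  by (simp add: haar2_def space_PiM)

lemma cyl_eq_prod_emb:
  assumes "0 \<le> k" "k < 2^n"
  shows "cyl n k = prod_emb UNIV coin {..<n} (PiE {..<n} (\<lambda>i. {bit k i}))"
proof -
  have "cyl n k = {x. \<forall>i<n. x i = digits_of k i}"
    using trunc2_eq_iff[of _ n "digits_of k"] trunc2_digits_of_eq[OF assms] by (auto simp: cyl_def)
  then show ?thesis
    by (auto simp: prod_emb_def space_PiM PiE_def Pi_def digits_of_def extensional_def)
qed

lemma sets_cyl [measurable]: "cyl n k \<in> sets haar2"
proof (cases "0 \<le> k \<and> k < 2^n")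
  case True
  then show ?thesis
    unfolding cyl_eq_prod_emb[OF conjunct1[OF True] conjunct2[OF True]] haar2_def
    by (intro sets_PiM_I) auto
next
  case False
  then have "cyl n k = {}"
    using trunc2_bounds by (auto simp: cyl_def)
  then show ?thesis by simp
qed

lemma measure_cyl:
  assumes "0 \<le> k" "k < 2^n"
  shows "measure haar2 (cyl n k) = 1 / 2^n"
proof -
  have "measure haar2 (cyl n k) = (\<Prod>i<n. measure (coin i) {bit k i})"
    unfolding cyl_eq_prod_emb[OF assms] haar2_def by (rule coins.measure_PiM_emb) auto
  also have "\<dots> = (\<Prod>i<n. 1/2)"
    by (intro prod.cong) (auto simp: measure_pmf_single pmf_bernoulli_True pmf_bernoulli_False)
  finally show ?thesis
    by (simp add: power_one_over)
qed

section \<open>Functions of finite level\<close>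

definition cyl_const :: "nat \<Rightarrow> (Z2 \<Rightarrow> 'a) \<Rightarrow> bool" where
  "cyl_const n g \<longleftrightarrow> (\<forall>x y. trunc2 x n = trunc2 y n \<longrightarrow> g x = g y)"

lemma cyl_constI: "(\<And>x y. trunc2 x n = trunc2 y n \<Longrightarrow> g x = g y) \<Longrightarrow> cyl_const n g"
  unfolding cyl_const_def by blast

lemma cyl_constD: "cyl_const n g \<Longrightarrow> trunc2 x n = trunc2 y n \<Longrightarrow> g x = g y"
  unfolding cyl_const_def by blast

lemma cyl_const_mono: "cyl_const n g \<Longrightarrow> n \<le> m \<Longrightarrow> cyl_const m g"
  by (meson cyl_constD cyl_constI trunc2_eq_mono)

lemma cyl_const_const [simp]: "cyl_const n (\<lambda>x. c)"
  by (rule cyl_constI) simp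

lemma cyl_const_comp: "cyl_const n f \<Longrightarrow> cyl_const n (\<lambda>x. F (f x))"
  by (rule cyl_constI) (metis cyl_constD)

lemma cyl_const_binop: "cyl_const n f \<Longrightarrow> cyl_const n g \<Longrightarrow> cyl_const n (\<lambda>x. F (f x) (g x))"
  by (rule cyl_constI) (metis cyl_constD)

lemmas cyl_const_diff = cyl_const_binop[where F="(-)"]
  and cyl_const_mult = cyl_const_binop[where F="(*)"]
  and cyl_const_cnj = cyl_const_comp[where F=cnj]

lemma cyl_const_cyl_ind: "j \<le> n \<Longrightarrow> cyl_const n (cyl_ind j k)"
  by (rule cyl_const_mono[of j]) (auto intro!: cyl_constI simp: cyl_def indicator_def)

lemma cyl_const_sum:
  "finite S \<Longrightarrow> (\<And>h. h \<in> S \<Longrightarrow> cyl_const n h) \<Longrightarrow> cyl_const n (\<lambda>x. \<Sum>h\<in>S. c h * h x)"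
proof (induction S rule: finite_induct)
  case (insert a F)
  then show ?case
    by (simp add: cyl_const_binop[where F="\<lambda>u v. c a * u + v"])
qed simp

lemma cyl_const_eq_digits_of:
  "cyl_const n g \<Longrightarrow> x \<in> cyl n k \<Longrightarrow> g x = g (digits_of k)"
  using trunc2_digits_of_eq[of k n] trunc2_bounds[of x n]
  unfolding cyl_const_def cyl_def by auto

lemma cyl_const_expansion:
  assumes "cyl_const n g"
  shows "g x = (\<Sum>k\<in>{0..<2^n}. g (digits_of k) * cyl_ind n k x)"
proof -
  have "(\<Sum>k\<in>{0..<2^n}. g (digits_of k) * cyl_ind n k x)
      = (\<Sum>k\<in>{0..<2^n}. if k = trunc2 x n then g (digits_of k) else 0)"
    by (intro sum.cong) (auto simp: cyl_def indicator_def)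
  also have "\<dots> = g x"
    using trunc2_bounds[of x n] cyl_const_eq_digits_of[OF assms, of x "trunc2 x n"]
    by (simp add: sum.delta' cyl_def)
  finally show ?thesis by simp
qed

lemma integrable_cyl_ind_mult:
  "integrable haar2 f \<Longrightarrow> integrable haar2 (\<lambda>x. cyl_ind n k x * f x)"
proof -
  have "(\<lambda>x. cyl_ind n k x * f x) = (\<lambda>x. indicator (cyl n k) x *\<^sub>R f x)"
    by (simp add: indicator_def fun_eq_iff)
  then show "integrable haar2 f \<Longrightarrow> integrable haar2 (\<lambda>x. cyl_ind n k x * f x)"
    by (simp add: integrable_mult_indicator)
qed

lemma integral_cyl_ind:
  assumes "0 \<le> k" "k < 2^n"
  shows "integral\<^sup>L haar2 (cyl_ind n k) = 1 / 2^n"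
proof -
  interpret prob_space haar2 by (rule prob_space_haar2)
  have "integral\<^sup>L haar2 (cyl_ind n k) = integral\<^sup>L haar2 (\<lambda>x. complex_of_real (indicator (cyl n k) x))"
    by (intro Bochner_Integration.integral_cong) (auto simp: indicator_def)
  also have "\<dots> = of_real (measure haar2 (cyl n k))"
    by simp
  finally show ?thesis
    using measure_cyl[OF assms] by simp
qed

lemma cyl_const_integral_mult:
  fixes h :: "Z2 \<Rightarrow> complex"
  assumes "cyl_const n h" "integrable haar2 f"
  shows integrable_cyl_const_mult: "integrable haar2 (\<lambda>x. h x * f x)"
    and integral_cyl_const_mult: "integral\<^sup>L haar2 (\<lambda>x. h x * f x)
      = (\<Sum>k\<in>{0..<2^n}. h (digits_of k) * integral\<^sup>L haar2 (\<lambda>x. cyl_ind n k x * f x))"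
proof -
  have eq: "(\<lambda>x. h x * f x) = (\<lambda>x. \<Sum>k\<in>{0..<2^n}. h (digits_of k) * (cyl_ind n k x * f x))"
    by (rule ext, subst cyl_const_expansion[OF assms(1)], simp only: sum_distrib_right mult.assoc)
  show "integrable haar2 (\<lambda>x. h x * f x)"
    unfolding eq using integrable_cyl_ind_mult[OF assms(2)] by auto
  show "integral\<^sup>L haar2 (\<lambda>x. h x * f x)
      = (\<Sum>k\<in>{0..<2^n}. h (digits_of k) * integral\<^sup>L haar2 (\<lambda>x. cyl_ind n k x * f x))"
    unfolding eq using integrable_cyl_ind_mult[OF assms(2)]
    by (subst Bochner_Integration.integral_sum) auto
qed

lemma cyl_const_integral:
  fixes h :: "Z2 \<Rightarrow> complex"
  assumes "cyl_const n h"
  shows integrable_cyl_const: "integrable haar2 h"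
    and integral_cyl_const: "integral\<^sup>L haar2 h = (\<Sum>k\<in>{0..<2^n}. h (digits_of k)) / 2^n"
proof -
  interpret prob_space haar2 by (rule prob_space_haar2)
  show "integrable haar2 h"
    using integrable_cyl_const_mult[OF assms, of "\<lambda>_. 1"] by simp
  have "integral\<^sup>L haar2 h = (\<Sum>k\<in>{0..<2^n}. h (digits_of k) * integral\<^sup>L haar2 (cyl_ind n k))"
    using integral_cyl_const_mult[OF assms, of "\<lambda>_. 1"] by simp
  also have "\<dots> = (\<Sum>k\<in>{0..<2^n}. h (digits_of k) / 2^n)"
    by (intro sum.cong) (auto simp: integral_cyl_ind)
  finally show "integral\<^sup>L haar2 h = (\<Sum>k\<in>{0..<2^n}. h (digits_of k)) / 2^n"
    by (simp add: sum_divide_distrib)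
qed

lemma integral_cyl_ind_mult:
  fixes h :: "Z2 \<Rightarrow> complex"
  assumes "cyl_const n h" "0 \<le> k" "k < 2^n"
  shows "integral\<^sup>L haar2 (\<lambda>x. cyl_ind n k x * h x) = h (digits_of k) / 2^n"
proof -
  have "integral\<^sup>L haar2 (\<lambda>x. cyl_ind n k x * h x)
      = (\<Sum>j\<in>{0..<2^n}. if j = k then h (digits_of j) else 0) / 2^n"
    using trunc2_digits_of_eq
    by (subst integral_cyl_const[OF cyl_const_mult[OF cyl_const_cyl_ind assms(1)]])
      (auto intro!: sum.cong simp: indicator_def cyl_def)
  then show ?thesis
    using assms(2,3) by simp
qed

lemma cyl_const_zero_if_orthogonal:
  fixes u :: "Z2 \<Rightarrow> complex"
  assumes "cyl_const n u" and orth: "\<And>k. 0 \<le> k \<Longrightarrow> k < 2^n \<Longrightarrow> integral\<^sup>L haar2 (\<lambda>x. cyl_ind n k x * u x) = 0"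
  shows "u x = 0"
proof -
  have "u (digits_of (trunc2 x n)) = 0"
    using orth[of "trunc2 x n"] integral_cyl_ind_mult[OF assms(1)] trunc2_bounds[of x n] by simp
  then show ?thesis
    using cyl_const_eq_digits_of[OF assms(1), of x "trunc2 x n"] by (simp add: cyl_def)
qed

section \<open>Averaging over cylinders\<close>

definition cyl_avg :: "nat \<Rightarrow> (Z2 \<Rightarrow> complex) \<Rightarrow> Z2 \<Rightarrow> complex" where
  "cyl_avg n f x = 2^n * integral\<^sup>L haar2 (\<lambda>y. cyl_ind n (trunc2 x n) y * f y)"

lemma cyl_const_cyl_avg: "cyl_const n (cyl_avg n f)"
  by (rule cyl_constI) (simp add: cyl_avg_def)

lemma integrable_cyl_avg: "integrable haar2 (cyl_avg n f)"
  by (rule integrable_cyl_const[OF cyl_const_cyl_avg])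

lemma cyl_avg_zero: "cyl_avg n (\<lambda>x. 0) = (\<lambda>x. 0)"
  by (simp add: cyl_avg_def fun_eq_iff)

lemma cyl_avg_digits_of:
  "0 \<le> k \<Longrightarrow> k < 2^n \<Longrightarrow> cyl_avg n f (digits_of k) = 2^n * integral\<^sup>L haar2 (\<lambda>y. cyl_ind n k y * f y)"
  by (simp add: cyl_avg_def trunc2_digits_of_eq)

lemma cyl_avg_cyl_const:
  assumes "cyl_const n g"
  shows "cyl_avg n g = g"
proof
  fix x
  have "x \<in> cyl n (trunc2 x n)"
    by (simp add: cyl_def)
  then show "cyl_avg n g x = g x"
    using integral_cyl_ind_mult[OF assms] trunc2_bounds[of x n]
      cyl_const_eq_digits_of[OF assms, of x "trunc2 x n"]
    by (simp add: cyl_avg_def)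
qed

lemma cyl_avg_orthogonal:
  assumes f: "integrable haar2 f" and h: "cyl_const n h"
  shows "integral\<^sup>L haar2 (\<lambda>x. h x * (f x - cyl_avg n f x)) = 0"
proof -
  have "integral\<^sup>L haar2 (\<lambda>x. h x * cyl_avg n f x)
      = (\<Sum>k\<in>{0..<2^n}. h (digits_of k) * cyl_avg n f (digits_of k)) / 2^n"
    by (rule integral_cyl_const[OF cyl_const_mult[OF h cyl_const_cyl_avg]])
  also have "\<dots> = (\<Sum>k\<in>{0..<2^n}. h (digits_of k) * integral\<^sup>L haar2 (\<lambda>x. cyl_ind n k x * f x))"
    unfolding sum_divide_distrib by (intro sum.cong refl) (simp add: cyl_avg_digits_of)
  also have "\<dots> = integral\<^sup>L haar2 (\<lambda>x. h x * f x)"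
    by (rule integral_cyl_const_mult[OF h f, symmetric])
  finally show ?thesis
    using integrable_cyl_const_mult[OF h f] integrable_cyl_const[OF cyl_const_mult[OF h cyl_const_cyl_avg]]
    by (simp add: right_diff_distrib)
qed

lemma cyl_avg_diff:
  assumes "integrable haar2 f" "integrable haar2 g"
  shows "cyl_avg n (\<lambda>x. f x - g x) = (\<lambda>x. cyl_avg n f x - cyl_avg n g x)"
  using assms by (auto simp: cyl_avg_def right_diff_distrib integrable_cyl_ind_mult)

lemma cyl_avg_cyl_avg:
  assumes "integrable haar2 f" "n \<le> m"
  shows "cyl_avg n (cyl_avg m f) = cyl_avg n f"
proof
  fix x
  have "integral\<^sup>L haar2 (\<lambda>y. cyl_ind n (trunc2 x n) y * (f y - cyl_avg m f y)) = 0"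
    by (rule cyl_avg_orthogonal[OF assms(1) cyl_const_cyl_ind[OF assms(2)]])
  then have "integral\<^sup>L haar2 (\<lambda>y. cyl_ind n (trunc2 x n) y * f y)
      = integral\<^sup>L haar2 (\<lambda>y. cyl_ind n (trunc2 x n) y * cyl_avg m f y)"
    using assms(1) by (simp add: right_diff_distrib integrable_cyl_ind_mult integrable_cyl_avg)
  then show "cyl_avg n (cyl_avg m f) x = cyl_avg n f x"
    by (simp add: cyl_avg_def)
qed

lemma integral_cyl_avg:
  assumes "integrable haar2 f"
  shows "integral\<^sup>L haar2 (cyl_avg n f) = integral\<^sup>L haar2 f"
  using cyl_avg_orthogonal[OF assms cyl_const_const[of n 1]] assms integrable_cyl_avg[of n f]
  by simp

lemma L2I: "f \<in> borel_measurable haar2 \<Longrightarrow> integrable haar2 (\<lambda>x. (cmod (f x))^2) \<Longrightarrow> f \<in> L2"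
  by (simp add: L2_def)

lemma L2_integrable:
  assumes "f \<in> L2"
  shows "integrable haar2 f"
proof -
  interpret prob_space haar2 by (rule prob_space_haar2)
  have m: "f \<in> borel_measurable haar2" and sq: "integrable haar2 (\<lambda>x. (cmod (f x))^2)"
    using assms by (simp_all add: L2_def)
  have "integrable haar2 (\<lambda>x. cmod (f x))"
    by (rule square_integrable_imp_integrable[OF _ sq]) (use m in measurable)
  then show ?thesis
    using m by (simp add: integrable_norm_iff)
qed

lemma L2_dominated:
  assumes "f \<in> L2" "g \<in> L2" "u \<in> borel_measurable haar2"
    and le: "\<And>x. cmod (u x) \<le> cmod (f x) + cmod (g x)"
  shows "u \<in> L2"
proof (rule L2I)
  show [measurable]: "u \<in> borel_measurable haar2" by fact
  have sq: "(cmod (u x))^2 \<le> 2 * (cmod (f x))^2 + 2 * (cmod (g x))^2" for x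
  proof -
    have "(cmod (u x))^2 \<le> (cmod (f x) + cmod (g x))^2"
      using le[of x] by (intro power_mono) auto
    also have "\<dots> \<le> 2 * (cmod (f x))^2 + 2 * (cmod (g x))^2"
      using sum_squares_ge_zero[of "cmod (f x) - cmod (g x)" 0] by (simp add: power2_eq_square algebra_simps)
    finally show ?thesis .
  qed
  show "integrable haar2 (\<lambda>x. (cmod (u x))^2)"
  proof (rule Bochner_Integration.integrable_bound)
    show "integrable haar2 (\<lambda>x. 2 * (cmod (f x))^2 + 2 * (cmod (g x))^2)"
      using assms(1,2) by (simp add: L2_def)
    show "AE x in haar2. norm ((cmod (u x))^2) \<le> norm (2 * (cmod (f x))^2 + 2 * (cmod (g x))^2)"
      using sq by simp
  qed measurable
qed

lemma L2_add:
  assumes "f \<in> L2" "g \<in> L2"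
  shows "(\<lambda>x. f x + g x) \<in> L2"
proof (rule L2_dominated[OF assms])
  show "(\<lambda>x. f x + g x) \<in> borel_measurable haar2"
    using assms by (auto simp: L2_def)
qed (rule norm_triangle_ineq)

lemma L2_diff:
  assumes "f \<in> L2" "g \<in> L2"
  shows "(\<lambda>x. f x - g x) \<in> L2"
proof (rule L2_dominated[OF assms])
  show "(\<lambda>x. f x - g x) \<in> borel_measurable haar2"
    using assms by (auto simp: L2_def)
qed (rule norm_triangle_ineq4)

lemma cyl_const_L2:
  assumes "cyl_const n g"
  shows "g \<in> L2"
proof (rule L2I)
  show "g \<in> borel_measurable haar2"
    using integrable_cyl_const[OF assms] by (rule borel_measurable_integrable)
  have "integrable haar2 (\<lambda>x. Re (g x * cnj (g x)))"
    by (intro integrable_Re integrable_cyl_const[OF cyl_const_mult[OF assms cyl_const_cnj[OF assms]]])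
  then show "integrable haar2 (\<lambda>x. (cmod (g x))^2)"
    by (simp only: complex_norm_square[symmetric] Re_complex_of_real)
qed

lemma cyl_avg_L2: "cyl_avg n f \<in> L2"
  by (rule cyl_const_L2[OF cyl_const_cyl_avg])

definition sqnorm :: "(Z2 \<Rightarrow> complex) \<Rightarrow> real" where
  "sqnorm u = integral\<^sup>L haar2 (\<lambda>x. (cmod (u x))^2)"

abbreviation defect :: "nat \<Rightarrow> (Z2 \<Rightarrow> complex) \<Rightarrow> real" where
  "defect n f \<equiv> sqnorm (\<lambda>x. f x - cyl_avg n f x)"

lemma sqnorm_nonneg: "0 \<le> sqnorm u"
  unfolding sqnorm_def by (rule integral_nonneg_AE) auto

lemma L2norm_eq_sqrt_sqnorm: "L2norm u = sqrt (sqnorm u)"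
  by (simp add: L2norm_def sqnorm_def)

lemma sqnorm_commute: "sqnorm (\<lambda>x. f x - g x) = sqnorm (\<lambda>x. g x - f x)"
  by (simp add: sqnorm_def norm_minus_commute)

lemma sqnorm_add_le:
  assumes "f \<in> L2" "g \<in> L2"
  shows "sqnorm (\<lambda>x. f x + g x) \<le> 2 * sqnorm f + 2 * sqnorm g"
proof -
  have "(cmod (f x + g x))^2 \<le> 2 * (cmod (f x))^2 + 2 * (cmod (g x))^2" for x
  proof -
    have "(cmod (f x + g x))^2 \<le> (cmod (f x) + cmod (g x))^2"
      by (intro power_mono norm_triangle_ineq) auto
    also have "\<dots> \<le> 2 * (cmod (f x))^2 + 2 * (cmod (g x))^2"
      using sum_squares_ge_zero[of "cmod (f x) - cmod (g x)" 0] by (simp add: power2_eq_square algebra_simps)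
    finally show ?thesis .
  qed
  then have "sqnorm (\<lambda>x. f x + g x) \<le> integral\<^sup>L haar2 (\<lambda>x. 2 * (cmod (f x))^2 + 2 * (cmod (g x))^2)"
    unfolding sqnorm_def using assms L2_add[OF assms] by (intro integral_mono) (auto simp: L2_def)
  also have "\<dots> = 2 * sqnorm f + 2 * sqnorm g"
    using assms by (simp add: sqnorm_def L2_def)
  finally show ?thesis .
qed

lemma sqnorm_pythagoras:
  assumes f: "f \<in> L2"
  shows "sqnorm f = defect n f + sqnorm (cyl_avg n f)"
proof -
  let ?d = "\<lambda>x. f x - cyl_avg n f x" and ?a = "cyl_avg n f"
  have fi: "integrable haar2 f"
    by (rule L2_integrable[OF f])
  have dL2: "?d \<in> L2"
    by (rule L2_diff[OF f cyl_avg_L2])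
  have pointwise: "(cmod (f x))^2 = (cmod (?d x))^2 + (cmod (?a x))^2 + 2 * Re (cnj (?a x) * ?d x)" for x
    unfolding cmod_power2 by (simp add: algebra_simps power2_eq_square)
  have ic: "integrable haar2 (\<lambda>x. cnj (?a x) * ?d x)"
    by (rule integrable_cyl_const_mult[OF cyl_const_cnj[OF cyl_const_cyl_avg]])
      (auto intro!: fi integrable_cyl_avg)
  have "integral\<^sup>L haar2 (\<lambda>x. cnj (?a x) * ?d x) = 0"
    by (rule cyl_avg_orthogonal[OF fi cyl_const_cnj[OF cyl_const_cyl_avg]])
  then have "integral\<^sup>L haar2 (\<lambda>x. Re (cnj (?a x) * ?d x)) = 0"
    unfolding integral_Re[OF ic] by simp
  then have "integral\<^sup>L haar2 (\<lambda>x. 2 * Re (cnj (?a x) * ?d x)) = 0"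
    by (simp only: integral_mult_right_zero)
  moreover have "integrable haar2 (\<lambda>x. 2 * Re (cnj (?a x) * ?d x))"
    by (intro integrable_mult_right integrable_Re ic)
  moreover have "integrable haar2 (\<lambda>x. (cmod (?d x))^2)" "integrable haar2 (\<lambda>x. (cmod (?a x))^2)"
    using dL2 cyl_avg_L2 by (auto simp: L2_def)
  ultimately show ?thesis
    unfolding sqnorm_def pointwise by simp
qed

lemma defect_le_sqnorm: "f \<in> L2 \<Longrightarrow> defect n f \<le> sqnorm f"
  and sqnorm_cyl_avg_le: "f \<in> L2 \<Longrightarrow> sqnorm (cyl_avg n f) \<le> sqnorm f"
  using sqnorm_pythagoras[of f n] sqnorm_nonneg[of "cyl_avg n f"] sqnorm_nonneg[of "\<lambda>x. f x - cyl_avg n f x"]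
  by linarith+

lemma Vgens_cyl_const: "h \<in> Vgens n \<Longrightarrow> cyl_const n h"
  unfolding Vgens_def by (auto intro!: cyl_constI dest: trunc2_eq_mono)

lemma V_cyl_const:
  assumes "g \<in> V n"
  shows "cyl_const n g"
proof -
  obtain S c where "finite S" "S \<subseteq> Vgens n" "g = (\<lambda>x. \<Sum>h\<in>S. c h * h x)"
    using assms unfolding V_def by blast
  then show ?thesis
    using cyl_const_sum[of S n c] Vgens_cyl_const by blast
qed

lemma cyl_ind_in_Vgens:
  assumes "0 \<le> k" "k < 2^n"
  shows "cyl_ind n k \<in> Vgens n"
proof -
  have "cyl_ind n k = (\<lambda>x. if trunc2 x n = k mod 2^n then 1 else 0)"
    using assms by (auto simp: indicator_def cyl_def)
  then show ?thesis
    unfolding Vgens_def by blast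
qed

lemma cyl_ind_in_V: "0 \<le> k \<Longrightarrow> k < 2^n \<Longrightarrow> cyl_ind n k \<in> V n"
  unfolding V_def by (intro CollectI exI[of _ "{cyl_ind n k}"] exI[of _ "\<lambda>_. 1"])
    (auto simp: cyl_ind_in_Vgens)

lemma inj_on_cyl_ind: "inj_on (cyl_ind n) {0..<2^n}"
proof (rule inj_onI)
  fix k k' assume k: "k \<in> {0..<2^n}" and eq: "cyl_ind n k = cyl_ind n k'"
  have "cyl_ind n k (digits_of k) = 1"
    using k trunc2_digits_of_eq[of k n] by (simp add: cyl_def)
  then have "cyl_ind n k' (digits_of k) = 1"
    by (simp only: eq)
  then show "k = k'"
    using k trunc2_digits_of_eq[of k n] by (auto simp: cyl_def indicator_def split: if_splits)
qed

lemma cyl_const_in_V: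
  assumes "cyl_const n g"
  shows "g \<in> V n"
proof -
  \<comment> \<open>the coefficient of an indicator is the value of \<open>g\<close> at an arbitrary point of its cylinder\<close>
  define c where "c = (\<lambda>h::Z2 \<Rightarrow> complex. g (SOME x. h x = 1))"
  have c: "c (cyl_ind n k) = g (digits_of k)" if "k \<in> {0..<2^n}" for k
  proof -
    have "\<exists>x. cyl_ind n k x = 1"
      using that trunc2_digits_of_eq[of k n] by (intro exI[of _ "digits_of k"]) (simp add: cyl_def)
    then have "cyl_ind n k (SOME x. cyl_ind n k x = 1) = 1"
      by (rule someI_ex)
    then have "(SOME x. cyl_ind n k x = 1) \<in> cyl n k"
      by (auto simp: indicator_def split: if_splits)
    then show ?thesis
      unfolding c_def by (rule cyl_const_eq_digits_of[OF assms])
  qed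
  have "g = (\<lambda>x. \<Sum>h\<in>cyl_ind n ` {0..<2^n}. c h * h x)"
  proof
    fix x
    have "(\<Sum>h\<in>cyl_ind n ` {0..<2^n}. c h * h x) = (\<Sum>k\<in>{0..<2^n}. c (cyl_ind n k) * cyl_ind n k x)"
      by (rule sum.reindex[OF inj_on_cyl_ind, unfolded comp_def])
    also have "\<dots> = (\<Sum>k\<in>{0..<2^n}. g (digits_of k) * cyl_ind n k x)"
      by (intro sum.cong refl) (simp add: c)
    finally show "g x = (\<Sum>h\<in>cyl_ind n ` {0..<2^n}. c h * h x)"
      using cyl_const_expansion[OF assms, of x] by simp
  qed
  moreover have "cyl_ind n ` {0..<2^n} \<subseteq> Vgens n"
    using cyl_ind_in_Vgens by auto
  ultimately show ?thesis
    unfolding V_def by blast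
qed

lemma P_eq_cyl_avg:
  assumes f: "integrable haar2 f"
  shows "P n f = cyl_avg n f"
  unfolding P_def
proof (rule someI2[where a="cyl_avg n f"])
  show "cyl_avg n f \<in> V n \<and> (\<forall>h\<in>V n. integral\<^sup>L haar2 (\<lambda>x. (f x - cyl_avg n f x) * cnj (h x)) = 0)"
    using cyl_const_in_V[OF cyl_const_cyl_avg] cyl_avg_orthogonal[OF f cyl_const_cnj[OF V_cyl_const]]
    by (simp add: mult.commute)
next
  fix g
  assume g: "g \<in> V n \<and> (\<forall>h\<in>V n. integral\<^sup>L haar2 (\<lambda>x. (f x - g x) * cnj (h x)) = 0)"
  have gi: "integrable haar2 g"
    using g by (blast intro: integrable_cyl_const V_cyl_const)
  have "cyl_avg n f x - g x = 0" for x
  proof (rule cyl_const_zero_if_orthogonal)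
    show "cyl_const n (\<lambda>x. cyl_avg n f x - g x)"
      using g by (intro cyl_const_diff cyl_const_cyl_avg V_cyl_const) blast
    fix k :: int
    assume k: "0 \<le> k" "k < 2^n"
    have "integral\<^sup>L haar2 (\<lambda>x. (f x - g x) * cnj (cyl_ind n k x)) = 0"
      using g cyl_ind_in_V[OF k] by blast
    moreover have "(f x - g x) * cnj (cyl_ind n k x) = cyl_ind n k x * (f x - g x)" for x
      by (simp add: indicator_def)
    ultimately have "integral\<^sup>L haar2 (\<lambda>x. cyl_ind n k x * (f x - g x)) = 0"
      by simp
    moreover have "integral\<^sup>L haar2 (\<lambda>x. cyl_ind n k x * (f x - cyl_avg n f x)) = 0"
      by (rule cyl_avg_orthogonal[OF f cyl_const_cyl_ind]) simp
    ultimately show "integral\<^sup>L haar2 (\<lambda>x. cyl_ind n k x * (cyl_avg n f x - g x)) = 0"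
      using f gi integrable_cyl_avg[of n f]
      by (simp add: right_diff_distrib integrable_cyl_ind_mult)
  qed
  then show "g = cyl_avg n f"
    by auto
qed

section \<open>Characters and Parseval's identity\<close>

lemma dexp_mult_Ints:
  assumes "q \<in> Lam"
  shows "q * 2^(dexp q) \<in> \<int>"
proof -
  from assms obtain m :: nat where "q * 2^m \<in> \<int>"
    by (auto simp: Lam_def)
  then show ?thesis
    unfolding dexp_def by (rule LeastI)
qed

lemma dexp_le: "q * 2^m \<in> \<int> \<Longrightarrow> dexp q \<le> m"
  unfolding dexp_def by (rule Least_le)

lemma dexp_0 [simp]: "dexp 0 = 0"
  using dexp_le[of 0 0] by simp

lemma dexp_ge_1:
  assumes "q \<in> Lam" "q \<noteq> 0"
  shows "1 \<le> dexp q"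
proof (rule ccontr)
  assume "\<not> 1 \<le> dexp q"
  then have "dexp q = 0"
    by simp
  then have "q \<in> \<int>"
    using dexp_mult_Ints[OF assms(1)] by simp
  moreover have "0 \<le> q" "q < 1"
    using assms(1) by (auto simp: Lam_def)
  ultimately show False
    using assms(2) by (auto elim!: Ints_cases)
qed

lemma trunc2_diff_dvd: "d \<le> m \<Longrightarrow> (2::int)^d dvd (trunc2 x m - trunc2 x d)"
proof (induction m rule: dec_induct)
  case (step m)
  have "trunc2 x (Suc m) - trunc2 x d = (trunc2 x m - trunc2 x d) + (if x m then 2^m else 0)"
    by (simp add: trunc2_Suc)
  moreover have "(2::int)^d dvd (if x m then 2^m else 0)"
    using step(1) by (simp add: le_imp_power_dvd)
  ultimately show ?case
    using step.IH by (metis dvd_add)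
qed simp

lemma cis_2pi_int: "cis (2 * pi * real_of_int z) = 1"
  by (rule cis_multiple_2pi) simp

lemma chr_eq_trunc2:
  assumes q: "q \<in> Lam" and m: "dexp q \<le> m"
  shows "chr q x = cis (- 2 * pi * real_of_rat q * real_of_int (trunc2 x m))"
proof -
  let ?d = "dexp q"
  obtain a where a: "q * 2^?d = of_int a"
    using dexp_mult_Ints[OF q] by (auto elim: Ints_cases)
  obtain j where j: "trunc2 x m - trunc2 x ?d = 2^?d * j"
    using trunc2_diff_dvd[OF m, of x] by (auto elim: dvdE)
  have "real_of_rat q * 2^?d = real_of_int a"
    using arg_cong[OF a, of real_of_rat] by (simp add: of_rat_mult of_rat_power)
  then have "- 2 * pi * real_of_rat q * real_of_int (trunc2 x m)
      = - 2 * pi * real_of_rat q * real_of_int (trunc2 x ?d) + 2 * pi * real_of_int (- a * j)"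
    using arg_cong[OF j, of real_of_int] by (simp add: algebra_simps)
  then have "cis (- 2 * pi * real_of_rat q * real_of_int (trunc2 x m))
      = cis (- 2 * pi * real_of_rat q * real_of_int (trunc2 x ?d)) * cis (2 * pi * real_of_int (- a * j))"
    by (simp only: cis_mult)
  then show ?thesis
    using cis_2pi_int[of "- a * j"] by (simp add: chr_def)
qed

lemma chr_digits_of:
  assumes "q \<in> Lam" "dexp q \<le> m" "0 \<le> t" "t < 2^m"
  shows "chr q (digits_of t) = cis (- 2 * pi * real_of_rat q * real_of_int t)"
  using chr_eq_trunc2[OF assms(1,2)] trunc2_digits_of_eq[OF assms(3,4)] by simp

lemma cyl_const_chr: "dexp q \<le> m \<Longrightarrow> cyl_const m (chr q)"
  by (rule cyl_const_mono[of "dexp q"]) (auto intro!: cyl_constI simp: chr_def)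

lemma integrable_chr_mult: "integrable haar2 g \<Longrightarrow> integrable haar2 (\<lambda>x. chr q x * g x)"
  by (rule integrable_cyl_const_mult[OF cyl_const_chr[OF order_refl]])

lemma chr_0 [simp]: "chr 0 x = 1"
  by (simp add: chr_def)

lemma fourier_0: "fourier g 0 = integral\<^sup>L haar2 g"
  by (simp add: fourier_def)

lemma fourier_diff:
  assumes "integrable haar2 g" "integrable haar2 h"
  shows "fourier (\<lambda>x. g x - h x) q = fourier g q - fourier h q"
  using assms by (simp add: fourier_def right_diff_distrib integrable_chr_mult)

lemma chr_digits_of_add_half:
  assumes q: "q \<in> Lam" and d: "dexp q = Suc n" and k: "0 \<le> k" "k < 2^n"
  shows "chr q (digits_of (k + 2^n)) = - chr q (digits_of k)"
proof -
  obtain a where a: "q * 2^Suc n = of_int a"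
    using dexp_mult_Ints[OF q] d by (auto elim: Ints_cases)
  \<comment> \<open>\<open>a\<close> is odd by minimality of \<open>dexp q\<close>, so the shift by \<open>2^n\<close> turns the phase by an odd multiple of \<open>pi\<close>\<close>
  have "odd a"
  proof
    assume "even a"
    then obtain b where "a = 2 * b" ..
    then have "q * 2^n = of_int b"
      using a by simp
    then have "dexp q \<le> n"
      by (intro dexp_le) simp
    then show False
      using d by simp
  qed
  then obtain b where b: "a = 2 * b + 1"
    by (auto elim: oddE)
  have "real_of_rat q * 2^n = real_of_int a / 2"
    using arg_cong[OF a, of real_of_rat] by (simp add: of_rat_mult of_rat_power field_simps)
  then have "- 2 * pi * real_of_rat q * real_of_int (k + 2^n)
      = - 2 * pi * real_of_rat q * real_of_int k + 2 * pi * real_of_int (- b - 1) + pi"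
    unfolding b by (simp add: field_simps)
  then have "cis (- 2 * pi * real_of_rat q * real_of_int (k + 2^n))
      = cis (- 2 * pi * real_of_rat q * real_of_int k) * cis (2 * pi * real_of_int (- b - 1)) * cis pi"
    by (simp only: cis_mult)
  then have "cis (- 2 * pi * real_of_rat q * real_of_int (k + 2^n))
      = - cis (- 2 * pi * real_of_rat q * real_of_int k)"
    by (simp only: cis_2pi_int cis_pi) simp
  then show ?thesis
    using k by (simp add: chr_digits_of[OF q, of "Suc n"] d)
qed

lemma cyl_avg_chr_top:
  assumes q: "q \<in> Lam" and d: "dexp q = Suc n"
  shows "cyl_avg n (chr q) x = 0"
proof -
  let ?k = "trunc2 x n"
  have k: "0 \<le> ?k" "?k < 2^n"
    by (rule trunc2_bounds)+
  have c: "cyl_const (Suc n) (chr q)"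
    using cyl_const_chr d by simp
  have "integral\<^sup>L haar2 (\<lambda>y. cyl_ind n ?k y * chr q y)
      = integral\<^sup>L haar2 (\<lambda>y. cyl_ind (Suc n) ?k y * chr q y + cyl_ind (Suc n) (?k + 2^n) y * chr q y)"
    by (simp add: cyl_ind_split[OF k] distrib_right)
  also have "\<dots> = (chr q (digits_of ?k) + chr q (digits_of (?k + 2^n))) / 2^Suc n"
    using k integrable_cyl_const[OF c]
    by (simp add: integrable_cyl_ind_mult integral_cyl_ind_mult[OF c] add_divide_distrib)
  also have "\<dots> = 0"
    using chr_digits_of_add_half[OF q d k] by simp
  finally show ?thesis
    by (simp add: cyl_avg_def)
qed

lemma cyl_avg_chr:
  assumes q: "q \<in> Lam" and n: "n < dexp q"
  shows "cyl_avg n (chr q) = (\<lambda>x. 0)"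
proof -
  obtain m where m: "dexp q = Suc m" and "n \<le> m"
    using n by (cases "dexp q") auto
  then have "cyl_avg n (chr q) = cyl_avg n (cyl_avg m (chr q))"
    using integrable_cyl_const[OF cyl_const_chr[OF order_refl]] by (simp add: cyl_avg_cyl_avg)
  also have "cyl_avg m (chr q) = (\<lambda>x. 0)"
    using cyl_avg_chr_top[OF q m] by (simp add: fun_eq_iff)
  finally show ?thesis
    by (simp add: cyl_avg_zero)
qed

lemma fourier_cyl_const_eq_0:
  assumes g: "cyl_const n g" and q: "q \<in> Lam" "n < dexp q"
  shows "fourier g q = 0"
proof -
  have "integral\<^sup>L haar2 (\<lambda>x. g x * (chr q x - cyl_avg n (chr q) x)) = 0"
    by (rule cyl_avg_orthogonal[OF integrable_cyl_const[OF cyl_const_chr[OF order_refl]] g])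
  then show ?thesis
    by (simp add: fourier_def cyl_avg_chr[OF q] mult.commute)
qed

lemma fourier_cyl_avg:
  assumes g: "integrable haar2 g" and q: "q \<in> Lam"
  shows "fourier (cyl_avg n g) q = (if dexp q \<le> n then fourier g q else 0)"
proof (cases "dexp q \<le> n")
  case True
  have "integral\<^sup>L haar2 (\<lambda>x. chr q x * (g x - cyl_avg n g x)) = 0"
    by (rule cyl_avg_orthogonal[OF g cyl_const_chr[OF True]])
  then show ?thesis
    using True g integrable_cyl_avg[of n g]
    by (simp add: fourier_def right_diff_distrib integrable_chr_mult)
next
  case False
  then show ?thesis
    using fourier_cyl_const_eq_0[OF cyl_const_cyl_avg q] by simp
qed

lemma sum_cis_multiples:
  fixes N :: nat and d :: int
  assumes N: "N > 0" and d: "\<bar>d\<bar> < int N"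
  shows "(\<Sum>a<N. cis (2 * pi * real a * real_of_int d / real N)) = (if d = 0 then of_nat N else 0)"
proof (cases "d = 0")
  case False
  define z where "z = cis (2 * pi * real_of_int d / real N)"
  have z_power: "cis (2 * pi * real a * real_of_int d / real N) = z ^ a" for a
    unfolding z_def by (subst Complex.DeMoivre) (simp add: algebra_simps)
  have "z \<noteq> 1"
  proof
    assume "z = 1"
    then have "cos (2 * pi * real_of_int d / real N) = 1"
      unfolding z_def by (metis cis.sel(1) one_complex.sel(1))
    then obtain m :: int where "2 * pi * real_of_int d / real N = real_of_int m * 2 * pi"
      using cos_one_2pi_int by blast
    then have "d = m * int N"
      using N by (simp add: field_simps) (metis of_int_eq_iff of_int_mult of_int_of_nat_eq)
    with False d show False
      by (cases "m = 0") (auto simp: abs_mult dest: mult_le_cancel_right1[THEN iffD2])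
  qed
  moreover have "z ^ N = 1"
  proof -
    have "real N * (2 * pi * real_of_int d / real N) = 2 * pi * real_of_int d"
      using N by simp
    then show ?thesis
      unfolding z_def Complex.DeMoivre by (simp only: cis_2pi_int)
  qed
  ultimately have "(\<Sum>a<N. z ^ a) = 0"
    by (simp add: geometric_sum)
  then show ?thesis
    using False by (simp add: z_power)
qed simp

lemma dft_parseval:
  fixes N :: nat and G :: "int \<Rightarrow> complex"
  assumes N: "N > 0"
  shows "(\<Sum>a<N. (cmod (\<Sum>t\<in>{0..<int N}. cis (- 2 * pi * real a * real_of_int t / real N) * G t))^2)
      = real N * (\<Sum>t\<in>{0..<int N}. (cmod (G t))^2)"
proof -
  let ?T = "{0..<int N}"
  define w where "w a d = cis (2 * pi * real a * real_of_int d / real N)" for a :: nat and d :: int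
  define S where "S a = (\<Sum>t\<in>?T. cis (- 2 * pi * real a * real_of_int t / real N) * G t)" for a
  have S_sq: "S a * cnj (S a) = (\<Sum>t\<in>?T. \<Sum>t'\<in>?T. G t * cnj (G t') * w a (t' - t))" for a
  proof -
    have "cis (- 2 * pi * real a * real_of_int t / real N) * cnj (cis (- 2 * pi * real a * real_of_int t' / real N))
        = w a (t' - t)" for t t'
      unfolding w_def cis_cnj cis_mult by (simp add: algebra_simps diff_divide_distrib)
    then show ?thesis
      unfolding S_def cnj_sum sum_product by (simp add: algebra_simps)
  qed
  have orth: "(\<Sum>a<N. G t * cnj (G t') * w a (t' - t)) = (if t' = t then G t * cnj (G t) * of_nat N else 0)"
    if "t \<in> ?T" "t' \<in> ?T" for t t'
  proof -
    have "\<bar>t' - t\<bar> < int N"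
      using that by auto
    then have "(\<Sum>a<N. w a (t' - t)) = (if t' - t = 0 then of_nat N else 0)"
      unfolding w_def by (rule sum_cis_multiples[OF N])
    then show ?thesis
      by (simp add: sum_distrib_left[symmetric])
  qed
  have "complex_of_real (\<Sum>a<N. (cmod (S a))^2) = (\<Sum>a<N. S a * cnj (S a))"
    by (simp only: of_real_sum complex_norm_square)
  also have "\<dots> = (\<Sum>t\<in>?T. \<Sum>t'\<in>?T. \<Sum>a<N. G t * cnj (G t') * w a (t' - t))"
    unfolding S_sq by (simp add: sum.swap[of _ "{..<N}"])
  also have "\<dots> = (\<Sum>t\<in>?T. \<Sum>t'\<in>?T. if t' = t then G t * cnj (G t) * of_nat N else 0)"
    by (intro sum.cong refl orth) auto
  also have "\<dots> = (\<Sum>t\<in>?T. G t * cnj (G t) * of_nat N)"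
    by (intro sum.cong refl) simp
  also have "\<dots> = of_nat N * (\<Sum>t\<in>?T. G t * cnj (G t))"
    by (simp add: sum_distrib_left mult.commute)
  also have "\<dots> = complex_of_real (real N * (\<Sum>t\<in>?T. (cmod (G t))^2))"
    by (simp only: of_real_mult of_real_sum complex_norm_square of_real_of_nat_eq)
  finally show ?thesis
    unfolding S_def by (simp only: of_real_eq_iff)
qed

definition Lam_upto :: "nat \<Rightarrow> rat set" where
  "Lam_upto m = {q \<in> Lam. dexp q \<le> m}"

definition dyadic :: "nat \<Rightarrow> nat \<Rightarrow> rat" where
  "dyadic m a = of_nat a / 2^m"

lemma dyadic_in_Lam_upto:
  assumes "a < 2^m"
  shows "dyadic m a \<in> Lam_upto m"
proof -
  have "of_nat a < (2::rat)^m"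
    using assms by (metis of_nat_less_iff of_nat_numeral of_nat_power)
  moreover have i: "dyadic m a * 2^m \<in> \<int>"
    by (simp add: dyadic_def)
  ultimately show ?thesis
    using dexp_le[OF i] by (auto simp: Lam_upto_def Lam_def dyadic_def intro!: exI[of _ m])
qed

lemma Lam_upto_eq_dyadic: "Lam_upto m = dyadic m ` {..<2^m}"
proof (intro equalityI subsetI)
  fix q assume "q \<in> Lam_upto m"
  then have q: "q \<in> Lam" and d: "dexp q \<le> m"
    by (auto simp: Lam_upto_def)
  have "q * 2^m = (q * 2^dexp q) * 2^(m - dexp q)"
    using d by (simp flip: power_add)
  also have "\<dots> \<in> \<int>"
    by (intro Ints_mult[OF dexp_mult_Ints[OF q]] Ints_power) simp
  finally have "q * 2^m \<in> \<int>" .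
  then obtain z where z: "q * 2^m = of_int z"
    by (auto elim: Ints_cases)
  have "0 \<le> q" "q < 1"
    using q by (auto simp: Lam_def)
  then have "0 \<le> (of_int z :: rat)" "(of_int z :: rat) < of_int (2^m)"
    unfolding z[symmetric] by auto
  then have "0 \<le> z" "z < 2^m"
    by (simp_all only: of_int_le_iff of_int_less_iff of_int_0)
  then show "q \<in> dyadic m ` {..<2^m}"
    using z by (intro image_eqI[of _ _ "nat z"]) (auto simp: dyadic_def field_simps nat_less_iff)
qed (auto simp: dyadic_in_Lam_upto)

lemma inj_on_dyadic: "inj_on (dyadic m) {..<2^m}"
  by (rule inj_onI) (simp add: dyadic_def)

lemma finite_Lam_upto: "finite (Lam_upto m)"
  by (simp add: Lam_upto_eq_dyadic)

lemma fourier_cyl_const_dyadic: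
  assumes g: "cyl_const m g" and a: "a < 2^m"
  shows "fourier g (dyadic m a)
    = (\<Sum>t\<in>{0..<2^m}. cis (- 2 * pi * real a * real_of_int t / 2^m) * g (digits_of t)) / 2^m"
proof -
  have q: "dyadic m a \<in> Lam" "dexp (dyadic m a) \<le> m"
    using dyadic_in_Lam_upto[OF a] by (auto simp: Lam_upto_def)
  have "real_of_rat (dyadic m a) = real a / 2^m"
    by (simp add: dyadic_def of_rat_divide of_rat_power)
  then show ?thesis
    unfolding fourier_def integral_cyl_const[OF cyl_const_mult[OF cyl_const_chr[OF q(2)] g]]
    by (intro arg_cong2[where f="(/)"] sum.cong refl) (auto simp: chr_digits_of[OF q])
qed

lemma sqnorm_cyl_const:
  assumes g: "cyl_const m g"
  shows "sqnorm g = (\<Sum>t\<in>{0..<2^m}. (cmod (g (digits_of t)))^2) / 2^m"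
proof -
  have "complex_of_real (sqnorm g) = integral\<^sup>L haar2 (\<lambda>x. complex_of_real ((cmod (g x))^2))"
    unfolding sqnorm_def by (rule integral_complex_of_real[symmetric])
  also have "\<dots> = integral\<^sup>L haar2 (\<lambda>x. g x * cnj (g x))"
    by (simp only: complex_norm_square)
  also have "\<dots> = (\<Sum>t\<in>{0..<2^m}. g (digits_of t) * cnj (g (digits_of t))) / 2^m"
    by (rule integral_cyl_const[OF cyl_const_mult[OF g cyl_const_cnj[OF g]]])
  also have "(\<Sum>t\<in>{0..<2^m}. g (digits_of t) * cnj (g (digits_of t)))
      = complex_of_real (\<Sum>t\<in>{0..<2^m}. (cmod (g (digits_of t)))^2)"
    by (simp only: of_real_sum complex_norm_square)
  finally have "complex_of_real (sqnorm g)
      = complex_of_real ((\<Sum>t\<in>{0..<2^m}. (cmod (g (digits_of t)))^2) / 2^m)"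
    by simp
  then show ?thesis
    by (simp only: of_real_eq_iff)
qed

lemma parseval_cyl_const:
  assumes g: "cyl_const m g"
  shows "sqnorm g = (\<Sum>q\<in>Lam_upto m. (cmod (fourier g q))^2)"
proof -
  have "(\<Sum>q\<in>Lam_upto m. (cmod (fourier g q))^2) = (\<Sum>a<2^m. (cmod (fourier g (dyadic m a)))^2)"
    unfolding Lam_upto_eq_dyadic by (rule sum.reindex[OF inj_on_dyadic, unfolded comp_def])
  also have "\<dots> = (\<Sum>a<2^m. (cmod (\<Sum>t\<in>{0..<2^m}.
      cis (- 2 * pi * real a * real_of_int t / 2^m) * g (digits_of t)))^2 / (2^m)^2)"
    by (intro sum.cong refl) (simp add: fourier_cyl_const_dyadic[OF g] norm_divide norm_power power_divide)
  also have "\<dots> = 2^m * (\<Sum>t\<in>{0..<2^m}. (cmod (g (digits_of t)))^2) / (2^m)^2"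
    using dft_parseval[of "2^m" "\<lambda>t. g (digits_of t)"] by (simp add: sum_divide_distrib[symmetric])
  also have "\<dots> = sqnorm g"
    by (simp add: sqnorm_cyl_const[OF g] power2_eq_square)
  finally show ?thesis ..
qed

lemma fourier_cyl_const_outside:
  "cyl_const m g \<Longrightarrow> q \<in> Lam \<Longrightarrow> q \<notin> Lam_upto m \<Longrightarrow> fourier g q = 0"
  by (rule fourier_cyl_const_eq_0) (auto simp: Lam_upto_def)

lemma defect_cyl_const:
  assumes g: "cyl_const m g"
  shows "defect n g = (\<Sum>q\<in>Lam_upto m. if n < dexp q then (cmod (fourier g q))^2 else 0)"
proof -
  have gi: "integrable haar2 g"
    by (rule integrable_cyl_const[OF g])
  have "cyl_const (max m n) (\<lambda>x. g x - cyl_avg n g x)"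
    by (intro cyl_const_diff cyl_const_mono[OF g] cyl_const_mono[OF cyl_const_cyl_avg]) auto
  then have "defect n g = (\<Sum>q\<in>Lam_upto (max m n). (cmod (fourier (\<lambda>x. g x - cyl_avg n g x) q))^2)"
    by (rule parseval_cyl_const)
  also have "\<dots> = (\<Sum>q\<in>Lam_upto (max m n). if n < dexp q then (cmod (fourier g q))^2 else 0)"
    using gi integrable_cyl_avg[of n g]
    by (intro sum.cong refl) (auto simp: fourier_diff fourier_cyl_avg Lam_upto_def)
  also have "\<dots> = (\<Sum>q\<in>Lam_upto m. if n < dexp q then (cmod (fourier g q))^2 else 0)"
    using fourier_cyl_const_outside[OF g] finite_Lam_upto
    by (intro sum.mono_neutral_right) (auto simp: Lam_upto_def)
  finally show ?thesis .
qed

lemma Hs_norm_cyl_const: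
  assumes g: "cyl_const m g"
  shows "(Hs_norm s g)^2 = (\<Sum>q\<in>Lam_upto m. (1 + abs2 q) powr (2 * s) * (cmod (fourier g q))^2)"
proof -
  have "infsum (\<lambda>q. (1 + abs2 q) powr (2 * s) * (cmod (fourier g q))^2) Lam
      = (\<Sum>q\<in>Lam_upto m. (1 + abs2 q) powr (2 * s) * (cmod (fourier g q))^2)"
  proof -
    have "infsum (\<lambda>q. (1 + abs2 q) powr (2 * s) * (cmod (fourier g q))^2) Lam
        = infsum (\<lambda>q. (1 + abs2 q) powr (2 * s) * (cmod (fourier g q))^2) (Lam_upto m)"
      by (rule infsum_cong_neutral) (auto simp: Lam_upto_def fourier_cyl_const_outside[OF g])
    then show ?thesis
      by (simp add: finite_Lam_upto)
  qed
  moreover have "0 \<le> (\<Sum>q\<in>Lam_upto m. (1 + abs2 q) powr (2 * s) * (cmod (fourier g q))^2)"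
    by (intro sum_nonneg mult_nonneg_nonneg) auto
  ultimately show ?thesis
    unfolding Hs_norm_def by simp
qed

section \<open>Weighted defects and the Sobolev norm\<close>

definition growth :: "real \<Rightarrow> real" where
  "growth s = 2 powr (2 * s)"

lemma growth_gt_1: "s > 0 \<Longrightarrow> growth s > 1"
  by (simp add: growth_def)

lemma growth_power: "growth s ^ n = 2 powr (2 * real n * s)"
  by (simp add: growth_def powr_power algebra_simps)

lemma powr_growth: "((2::real) ^ d) powr (2 * s) = growth s ^ d"
  by (simp add: growth_power powr_realpow[symmetric] powr_powr algebra_simps)

lemma sum_truncated_powers_le:
  fixes r :: real
  assumes "r > 1"
  shows "(\<Sum>n<L. if n < d then r^n else 0) \<le> r^d / (r - 1)"
proof -
  have "(\<Sum>n<L. if n < d then r^n else 0) = (\<Sum>n\<in>{..<L} \<inter> {..<d}. r^n)"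
    by (simp add: sum.inter_restrict)
  also have "\<dots> \<le> (\<Sum>n<d. r^n)"
    using assms by (intro sum_mono2) auto
  also have "\<dots> = (r^d - 1) / (r - 1)"
    using assms by (simp add: geometric_sum)
  also have "\<dots> \<le> r^d / (r - 1)"
    using assms by (simp add: divide_right_mono)
  finally show ?thesis .
qed

lemma level_weight_le_Hs_weight:
  assumes s: "s > 0"
  shows "(\<Sum>n<L. if n < dexp q then growth s ^ n else 0) \<le> (1 + abs2 q) powr (2 * s) / (growth s - 1)"
proof (cases "q = 0")
  case False
  have "growth s ^ dexp q = ((2::real) ^ dexp q) powr (2 * s)"
    by (simp add: powr_growth)
  also have "\<dots> \<le> (1 + abs2 q) powr (2 * s)"
    using False s by (intro powr_mono2) (auto simp: abs2_def)
  finally have "growth s ^ dexp q / (growth s - 1) \<le> (1 + abs2 q) powr (2 * s) / (growth s - 1)"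
    using growth_gt_1[OF s] by (simp add: divide_right_mono)
  with sum_truncated_powers_le[OF growth_gt_1[OF s], where L=L and d="dexp q"] show ?thesis
    by linarith
qed (use growth_gt_1[OF s] in simp)

lemma Hs_weight_le_level_weight:
  assumes s: "s > 0" and q: "q \<in> Lam" "q \<noteq> 0" and m: "dexp q \<le> m"
  shows "(1 + abs2 q) powr (2 * s) \<le> growth s ^ 2 * (\<Sum>n<m. if n < dexp q then growth s ^ n else 0)"
proof -
  let ?r = "growth s" and ?d = "dexp q"
  have d: "1 \<le> ?d"
    by (rule dexp_ge_1[OF q])
  then obtain e where e: "?d = Suc e"
    by (cases ?d) auto
  have "(1 + abs2 q) powr (2 * s) \<le> ((2::real) ^ Suc ?d) powr (2 * s)"
    using s q by (intro powr_mono2) (auto simp: abs2_def)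
  also have "\<dots> = ?r^2 * ?r^(?d - 1)"
    unfolding powr_growth e by (simp add: power2_eq_square)
  also have "?r^(?d - 1) = (if ?d - 1 < ?d then ?r^(?d - 1) else 0)"
    using d by simp
  also have "\<dots> \<le> (\<Sum>n<m. if n < ?d then ?r^n else 0)"
    using d m growth_gt_1[OF s] by (intro member_le_sum) auto
  finally show ?thesis
    by (simp add: mult_left_mono)
qed

lemma weighted_defects_eq_fourier_sum:
  assumes g: "cyl_const m g"
  shows "(\<Sum>n<L. r^n * defect n g)
    = (\<Sum>q\<in>Lam_upto m. (\<Sum>n<L. if n < dexp q then r^n else 0) * (cmod (fourier g q))^2)"
proof -
  have "(\<Sum>n<L. r^n * defect n g)
      = (\<Sum>n<L. \<Sum>q\<in>Lam_upto m. (if n < dexp q then r^n else 0) * (cmod (fourier g q))^2)"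
    unfolding defect_cyl_const[OF g] sum_distrib_left by (intro sum.cong refl) simp
  also have "\<dots> = (\<Sum>q\<in>Lam_upto m. (\<Sum>n<L. if n < dexp q then r^n else 0) * (cmod (fourier g q))^2)"
    by (subst sum.swap) (simp add: sum_distrib_right)
  finally show ?thesis .
qed

lemma weighted_defects_le_Hs_norm:
  assumes s: "s > 0" and g: "cyl_const m g"
  shows "(\<Sum>n<L. growth s ^ n * defect n g) \<le> (Hs_norm s g)^2 / (growth s - 1)"
proof -
  have "(\<Sum>n<L. growth s ^ n * defect n g)
      \<le> (\<Sum>q\<in>Lam_upto m. ((1 + abs2 q) powr (2 * s) / (growth s - 1)) * (cmod (fourier g q))^2)"
    unfolding weighted_defects_eq_fourier_sum[OF g]
    by (intro sum_mono mult_right_mono level_weight_le_Hs_weight[OF s]) auto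
  also have "\<dots> = (Hs_norm s g)^2 / (growth s - 1)"
    by (simp add: Hs_norm_cyl_const[OF g] sum_divide_distrib)
  finally show ?thesis .
qed

lemma Hs_norm_le_weighted_defects:
  assumes s: "s > 0" and g: "cyl_const m g" and mean: "fourier g 0 = 0"
  shows "(Hs_norm s g)^2 \<le> growth s ^ 2 * (\<Sum>n<m. growth s ^ n * defect n g)"
proof -
  have "(Hs_norm s g)^2
      \<le> (\<Sum>q\<in>Lam_upto m. (growth s ^ 2 * (\<Sum>n<m. if n < dexp q then growth s ^ n else 0)) * (cmod (fourier g q))^2)"
    unfolding Hs_norm_cyl_const[OF g]
  proof (intro sum_mono)
    fix q assume "q \<in> Lam_upto m"
    then show "(1 + abs2 q) powr (2 * s) * (cmod (fourier g q))^2
        \<le> (growth s ^ 2 * (\<Sum>n<m. if n < dexp q then growth s ^ n else 0)) * (cmod (fourier g q))^2"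
      using mean Hs_weight_le_level_weight[OF s, of q m]
      by (cases "q = 0") (auto simp: Lam_upto_def intro!: mult_right_mono)
  qed
  also have "\<dots> = growth s ^ 2 * (\<Sum>n<m. growth s ^ n * defect n g)"
    unfolding weighted_defects_eq_fourier_sum[OF g] sum_distrib_left[of "growth s ^ 2" _ "Lam_upto m"]
    by (simp only: mult.assoc)
  finally show ?thesis .
qed

section \<open>Locally constant functions\<close>

lemma cyl_trunc2: "cyl n (trunc2 x n) = {y. \<forall>i<n. y i = x i}"
  by (auto simp: cyl_def trunc2_eq_iff)

lemma open_cyl_trunc2: "open (cyl n (trunc2 x n))"
proof -
  have "open {y. \<forall>i\<in>{..<n}. y (id i) \<in> {x i}}"
    by (rule product_topology_basis') (auto simp: discrete_topology_class.open_discrete)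
  moreover have "{y. \<forall>i\<in>{..<n}. y (id i) \<in> {x i}} = cyl n (trunc2 x n)"
    by (auto simp: cyl_trunc2)
  ultimately show ?thesis
    by simp
qed

lemma open_contains_cyl_trunc2:
  assumes "open U" "x \<in> U"
  shows "\<exists>n. cyl n (trunc2 x n) \<subseteq> U"
proof -
  obtain V where V: "finite {i. V i \<noteq> UNIV}" "x \<in> PiE UNIV V" "PiE UNIV V \<subseteq> U"
    using assms unfolding open_fun_def openin_product_topology_alt by auto
  define n where "n = Suc (Max (insert 0 {i. V i \<noteq> UNIV}))"
  have "cyl n (trunc2 x n) \<subseteq> PiE UNIV V"
  proof
    fix y assume y: "y \<in> cyl n (trunc2 x n)"
    have "y i \<in> V i" for i
    proof (cases "V i = UNIV")
      case False
      then have "i < n"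
        using V(1) by (simp add: n_def le_imp_less_Suc)
      then show ?thesis
        using y V(2) by (auto simp: cyl_trunc2 PiE_iff)
    qed simp
    then show "y \<in> PiE UNIV V"
      by (simp add: PiE_iff)
  qed
  then show ?thesis
    using V(3) by blast
qed

lemma compact_UNIV_Z2: "compact (UNIV :: Z2 set)"
proof -
  have "compact_space (euclidean :: bool topology)"
    unfolding compact_space_def by (simp add: finite_imp_compact)
  then show ?thesis
    using compact_space_product_topology[of "\<lambda>_::nat. euclidean :: bool topology" UNIV]
    unfolding euclidean_product_topology compact_space_def by simp
qed

lemma locally_constant_imp_cyl_const:
  assumes "locally_constant g"
  shows "\<exists>m. cyl_const m g"
proof -
  have ex: "\<forall>x. \<exists>n. \<forall>y\<in>cyl n (trunc2 x n). g y = g x"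
  proof
    fix x
    obtain U where U: "open U" "x \<in> U" "\<forall>y\<in>U. g y = g x"
      using assms unfolding locally_constant_def by blast
    obtain n where "cyl n (trunc2 x n) \<subseteq> U"
      using open_contains_cyl_trunc2[OF U(1,2)] ..
    then show "\<exists>n. \<forall>y\<in>cyl n (trunc2 x n). g y = g x"
      using U(3) by blast
  qed
  obtain l where "\<forall>x. \<forall>y\<in>cyl (l x) (trunc2 x (l x)). g y = g x"
    using choice[OF ex] by blast
  then have l: "\<And>x y. y \<in> cyl (l x) (trunc2 x (l x)) \<Longrightarrow> g y = g x"
    by blast
  have "UNIV \<subseteq> (\<Union>x\<in>UNIV. cyl (l x) (trunc2 x (l x)))"
    by (auto simp: cyl_def)
  then obtain F where F: "finite F" "UNIV \<subseteq> (\<Union>x\<in>F. cyl (l x) (trunc2 x (l x)))"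
    by (rule compactE_image[OF compact_UNIV_Z2 open_cyl_trunc2]) blast
  define m where "m = Max (insert 0 (l ` F))"
  have "cyl_const m g"
  proof (rule cyl_constI)
    fix y z assume yz: "trunc2 y m = trunc2 z m"
    obtain p where p: "p \<in> F" "y \<in> cyl (l p) (trunc2 p (l p))"
      using F(2) by blast
    have "l p \<le> m"
      using p(1) F(1) by (simp add: m_def)
    then have "z \<in> cyl (l p) (trunc2 p (l p))"
      using p(2) trunc2_eq_mono[OF yz] by (simp add: cyl_def)
    then show "g y = g z"
      using l[OF p(2)] l[of z p] by simp
  qed
  then show ?thesis ..
qed

lemma cyl_const_imp_locally_constant:
  assumes "cyl_const m g"
  shows "locally_constant g"
  unfolding locally_constant_def
proof
  fix x
  have "\<forall>y\<in>cyl m (trunc2 x m). g y = g x"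
    unfolding cyl_def using cyl_constD[OF assms] by blast
  moreover have "x \<in> cyl m (trunc2 x m)"
    by (simp add: cyl_def)
  ultimately show "\<exists>U. open U \<and> x \<in> U \<and> (\<forall>y\<in>U. g y = g x)"
    using open_cyl_trunc2[of m x] by blast
qed

section \<open>Equality of the two spaces\<close>

lemma As_iff: "f \<in> As s \<longleftrightarrow> f \<in> L2 \<and> summable (\<lambda>n. growth s ^ n * defect n f)"
proof -
  have "(\<lambda>n. (L2norm (\<lambda>x. f x - P n f x))^2 * 2 powr (2 * real n * s)) = (\<lambda>n. growth s ^ n * defect n f)"
    if "f \<in> L2"
    using sqnorm_nonneg
    by (simp add: P_eq_cyl_avg[OF L2_integrable[OF that]] L2norm_eq_sqrt_sqnorm growth_power mult.commute)
  then show ?thesis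
    unfolding As_def by auto
qed

lemma Hs_norm_nonneg: "0 \<le> Hs_norm s g"
  unfolding Hs_norm_def by (intro real_sqrt_ge_zero infsum_nonneg) auto

lemma Hs_norm_commute: "Hs_norm s (\<lambda>x. g x - h x) = Hs_norm s (\<lambda>x. h x - g x)"
proof -
  have "fourier (\<lambda>x. g x - h x) q = - fourier (\<lambda>x. h x - g x) q" for q
    unfolding fourier_def by (simp add: algebra_simps flip: integral_minus)
  then show ?thesis
    unfolding Hs_norm_def by simp
qed

lemma cyl_avg_diff_residual:
  assumes f: "integrable haar2 f" and "n \<le> m" "j \<le> m"
  shows "(\<lambda>x. (cyl_avg m f x - cyl_avg n f x) - cyl_avg j (\<lambda>x. cyl_avg m f x - cyl_avg n f x) x)
    = cyl_avg m (\<lambda>x. f x - cyl_avg (max j n) f x)"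
proof -
  have avg_level: "cyl_avg m (cyl_avg k f) = cyl_avg k f" if "k \<le> m" for k
    using that by (intro cyl_avg_cyl_const cyl_const_mono[OF cyl_const_cyl_avg])
  have "cyl_avg j (cyl_avg n f) = (if j \<le> n then cyl_avg j f else cyl_avg n f)"
    using f by (auto simp: cyl_avg_cyl_avg intro!: cyl_avg_cyl_const cyl_const_mono[OF cyl_const_cyl_avg])
  then show ?thesis
    using assms avg_level[of "max j n"]
    by (auto simp: cyl_avg_diff integrable_cyl_avg cyl_avg_cyl_avg max_def fun_eq_iff)
qed

lemma defect_cyl_avg_diff_le:
  assumes f: "f \<in> L2" and "n \<le> m" "j \<le> m"
  shows "defect j (\<lambda>x. cyl_avg m f x - cyl_avg n f x) \<le> defect (max j n) f"
  unfolding cyl_avg_diff_residual[OF L2_integrable[OF f] assms(2,3)]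
  by (rule sqnorm_cyl_avg_le[OF L2_diff[OF f cyl_avg_L2]])

lemma weighted_defects_cyl_avg_diff_le:
  fixes r :: real
  assumes r: "r > 1" and f: "f \<in> L2" and nm: "n \<le> m"
  shows "(\<Sum>j<m. r^j * defect j (\<lambda>x. cyl_avg m f x - cyl_avg n f x))
    \<le> r^n / (r - 1) * defect n f + (\<Sum>j\<in>{n..<m}. r^j * defect j f)"
proof -
  have "(\<Sum>j<m. r^j * defect j (\<lambda>x. cyl_avg m f x - cyl_avg n f x))
      \<le> (\<Sum>j<m. r^j * defect (max j n) f)"
    using r by (intro sum_mono mult_left_mono defect_cyl_avg_diff_le[OF f nm]) auto
  also have "\<dots> = (\<Sum>j<n. r^j) * defect n f + (\<Sum>j\<in>{n..<m}. r^j * defect j f)"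
  proof -
    let ?F = "\<lambda>j. r^j * defect (max j n) f"
    have split: "{..<m} = {..<n} \<union> {n..<m}"
      using nm by auto
    have "sum ?F {..<m} = sum ?F {..<n} + sum ?F {n..<m}"
      unfolding split by (rule sum.union_disjoint) auto
    moreover have "sum ?F {..<n} = (\<Sum>j<n. r^j) * defect n f"
      unfolding sum_distrib_right by (intro sum.cong refl) simp
    moreover have "sum ?F {n..<m} = (\<Sum>j\<in>{n..<m}. r^j * defect j f)"
      by (intro sum.cong refl) simp
    ultimately show ?thesis
      by linarith
  qed
  also have "\<dots> \<le> r^n / (r - 1) * defect n f + (\<Sum>j\<in>{n..<m}. r^j * defect j f)"
  proof -
    have "(\<Sum>j<n. r^j) \<le> r^n / (r - 1)"
      using sum_truncated_powers_le[OF r, where L=n and d=n] by simp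
    then show ?thesis
      by (intro add_right_mono mult_right_mono) (simp_all add: sqnorm_nonneg)
  qed
  finally show ?thesis .
qed

lemma Hs_norm_cyl_avg_diff_le:
  assumes s: "s > 0" and f: "f \<in> L2" and sum: "summable (\<lambda>j. growth s ^ j * defect j f)" and nm: "n \<le> m"
  shows "(Hs_norm s (\<lambda>x. cyl_avg m f x - cyl_avg n f x))^2
    \<le> growth s ^ 2 * (1 / (growth s - 1) + 1) * (\<Sum>i. growth s ^ (i + n) * defect (i + n) f)"
proof -
  let ?r = "growth s" and ?h = "\<lambda>x. cyl_avg m f x - cyl_avg n f x"
  define a where "a j = ?r^j * defect j f" for j
  define T where "T = (\<Sum>i. a (i + n))"
  have r: "?r > 1"
    by (rule growth_gt_1[OF s])
  have a: "0 \<le> a j" for j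
    using r by (simp add: a_def sqnorm_nonneg)
  have "summable a"
    unfolding a_def[abs_def] by (rule sum)
  then have tail: "summable (\<lambda>i. a (i + n))"
    by (simp add: summable_iff_shift)
  have fi: "integrable haar2 f"
    by (rule L2_integrable[OF f])
  have h: "cyl_const m ?h"
    by (intro cyl_const_diff cyl_const_cyl_avg cyl_const_mono[OF cyl_const_cyl_avg nm])
  have "fourier ?h 0 = 0"
    using fi by (simp add: fourier_0 integrable_cyl_avg integral_cyl_avg)
  then have H: "(Hs_norm s ?h)^2 \<le> ?r^2 * (\<Sum>j<m. ?r^j * defect j ?h)"
    by (rule Hs_norm_le_weighted_defects[OF s h])
  have W: "(\<Sum>j<m. ?r^j * defect j ?h) \<le> a n / (?r - 1) + (\<Sum>j\<in>{n..<m}. a j)"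
    using weighted_defects_cyl_avg_diff_le[OF r f nm] by (simp add: a_def)
  have "(\<Sum>j\<in>{n..<m}. a j) = (\<Sum>i<m - n. a (i + n))"
    using nm sum.shift_bounds_nat_ivl[of a 0 n "m - n"] by (simp add: atLeast0LessThan)
  also have "\<dots> \<le> T"
    unfolding T_def by (rule sum_le_suminf[OF tail]) (simp_all add: a)
  finally have S: "(\<Sum>j\<in>{n..<m}. a j) \<le> T" .
  have "a n \<le> T"
    using sum_le_suminf[OF tail, of "{0}"] a by (simp add: T_def)
  then have "a n / (?r - 1) \<le> T / (?r - 1)"
    using r by (simp add: divide_right_mono)
  then have "(\<Sum>j<m. ?r^j * defect j ?h) \<le> T / (?r - 1) + T"
    using W S by linarith
  then have "(Hs_norm s ?h)^2 \<le> ?r^2 * (T / (?r - 1) + T)"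
    using H by (meson mult_left_mono order_trans zero_le_power2)
  then show ?thesis
    by (simp add: T_def a_def algebra_simps)
qed

lemma Hs_Cauchy_cyl_avg:
  assumes s: "s > 0" and f: "f \<in> L2" and sum: "summable (\<lambda>j. growth s ^ j * defect j f)"
  shows "\<forall>e>0. \<exists>N. \<forall>m\<ge>N. \<forall>n\<ge>N. Hs_norm s (\<lambda>x. cyl_avg m f x - cyl_avg n f x) < e"
proof (intro allI impI)
  fix e :: real
  assume e: "e > 0"
  define K where "K = growth s ^ 2 * (1 / (growth s - 1) + 1)"
  have K: "K > 0"
    using growth_gt_1[OF s] by (simp add: K_def add_pos_pos)
  obtain N where N: "\<And>n. n \<ge> N \<Longrightarrow> norm (\<Sum>i. growth s ^ (i + n) * defect (i + n) f) < e^2 / K"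
    using suminf_exist_split[OF _ sum, of "e^2 / K"] e K by auto
  have less: "Hs_norm s (\<lambda>x. cyl_avg m f x - cyl_avg n f x) < e" if "N \<le> n" "n \<le> m" for m n
  proof -
    have "(Hs_norm s (\<lambda>x. cyl_avg m f x - cyl_avg n f x))^2 \<le> K * (\<Sum>i. growth s ^ (i + n) * defect (i + n) f)"
      unfolding K_def by (rule Hs_norm_cyl_avg_diff_le[OF s f sum that(2)])
    also have "\<dots> < K * (e^2 / K)"
      using N[OF that(1)] K by (intro mult_strict_left_mono) auto
    finally show ?thesis
      using K e by (simp add: power2_less_imp_less)
  qed
  show "\<exists>N. \<forall>m\<ge>N. \<forall>n\<ge>N. Hs_norm s (\<lambda>x. cyl_avg m f x - cyl_avg n f x) < e"
  proof (intro exI allI impI)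
    fix m n assume "N \<le> m" "N \<le> n"
    then show "Hs_norm s (\<lambda>x. cyl_avg m f x - cyl_avg n f x) < e"
      using less[of n m] less[of m n] Hs_norm_commute[of s "cyl_avg m f"] by (cases "n \<le> m") auto
  qed
qed

lemma cyl_avg_L2_tendsto:
  assumes s: "s > 0" and sum: "summable (\<lambda>j. growth s ^ j * defect j f)"
  shows "(\<lambda>n. L2norm (\<lambda>x. cyl_avg n f x - f x)) \<longlonglongrightarrow> 0"
proof -
  have "defect n f \<le> growth s ^ n * defect n f" for n
  proof -
    have "1 \<le> growth s ^ n"
      using growth_gt_1[OF s] by simp
    then show ?thesis
      using mult_right_mono[OF _ sqnorm_nonneg] by fastforce
  qed
  then have "(\<lambda>n. defect n f) \<longlonglongrightarrow> 0"
    by (intro tendsto_sandwich[OF _ _ tendsto_const summable_LIMSEQ_zero[OF sum]])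
      (simp_all add: sqnorm_nonneg)
  then have "(\<lambda>n. sqrt (defect n f)) \<longlonglongrightarrow> 0"
    using tendsto_real_sqrt by fastforce
  then show ?thesis
    by (simp add: L2norm_eq_sqrt_sqnorm sqnorm_commute[of f])
qed

lemma As_subset_Hs:
  assumes s: "s > 0" and f: "f \<in> As s"
  shows "f \<in> Hs s"
proof -
  have fL: "f \<in> L2" and sum: "summable (\<lambda>n. growth s ^ n * defect n f)"
    using f by (simp_all add: As_iff)
  then show ?thesis
    unfolding Hs_def
    using Hs_Cauchy_cyl_avg[OF s fL sum] cyl_avg_L2_tendsto[OF s sum]
      cyl_const_imp_locally_constant[OF cyl_const_cyl_avg]
    by (intro CollectI conjI exI[of _ "\<lambda>n. cyl_avg n f"]) auto
qed

lemma defect_le_split: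
  assumes f: "f \<in> L2" and g: "g \<in> L2"
  shows "defect n f \<le> 2 * defect n g + 2 * defect n (\<lambda>x. f x - g x)"
proof -
  have "(\<lambda>x. f x - cyl_avg n f x)
      = (\<lambda>x. (g x - cyl_avg n g x) + ((f x - g x) - cyl_avg n (\<lambda>x. f x - g x) x))"
    using cyl_avg_diff[OF L2_integrable[OF f] L2_integrable[OF g]] by (auto simp: algebra_simps)
  then show ?thesis
    using sqnorm_add_le[OF L2_diff[OF g cyl_avg_L2] L2_diff[OF L2_diff[OF f g] cyl_avg_L2]]
    by simp
qed

text \<open>The approximant \<open>g\<close> enters only through \<open>sqnorm (f - g)\<close>, which tends to zero; the rest
  of the bound depends only on the fixed function \<open>G\<close>.\<close>

lemma weighted_defects_le_approximant:
  assumes s: "s > 0" and f: "f \<in> L2" and g: "cyl_const m g" and G: "cyl_const m' G"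
    and close: "Hs_norm s (\<lambda>x. g x - G x) \<le> 1"
  shows "(\<Sum>n<L. growth s ^ n * defect n f)
    \<le> 4 / (growth s - 1) + 4 * (Hs_norm s G)^2 / (growth s - 1)
      + 2 * (\<Sum>n<L. growth s ^ n) * sqnorm (\<lambda>x. f x - g x)"
proof -
  let ?r = "growth s" and ?u = "\<lambda>x. g x - G x"
  have r: "?r > 1"
    by (rule growth_gt_1[OF s])
  have gL: "g \<in> L2" and GL: "G \<in> L2"
    using g G by (simp_all add: cyl_const_L2)
  have u: "cyl_const (max m m') ?u"
    by (intro cyl_const_diff cyl_const_mono[OF g] cyl_const_mono[OF G]) auto
  have "defect n f \<le> 4 * defect n ?u + 4 * defect n G + 2 * sqnorm (\<lambda>x. f x - g x)" for n
    using defect_le_split[OF f gL, of n] defect_le_split[OF gL GL, of n]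
      defect_le_sqnorm[OF L2_diff[OF f gL], of n]
    by linarith
  then have "(\<Sum>n<L. ?r^n * defect n f)
      \<le> (\<Sum>n<L. ?r^n * (4 * defect n ?u + 4 * defect n G + 2 * sqnorm (\<lambda>x. f x - g x)))"
    using r by (intro sum_mono mult_left_mono) auto
  also have "\<dots> = 4 * (\<Sum>n<L. ?r^n * defect n ?u) + 4 * (\<Sum>n<L. ?r^n * defect n G)
      + 2 * (\<Sum>n<L. ?r^n) * sqnorm (\<lambda>x. f x - g x)"
    by (simp add: algebra_simps sum.distrib sum_distrib_left sum_distrib_right)
  also have "(\<Sum>n<L. ?r^n * defect n ?u) \<le> 1 / (?r - 1)"
  proof -
    have "(Hs_norm s ?u)^2 \<le> 1"
      using close Hs_norm_nonneg[of s ?u] by (simp add: power_le_one)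
    then show ?thesis
      using weighted_defects_le_Hs_norm[OF s u, of L] r by (smt (verit) divide_right_mono)
  qed
  also have "(\<Sum>n<L. ?r^n * defect n G) \<le> (Hs_norm s G)^2 / (?r - 1)"
    by (rule weighted_defects_le_Hs_norm[OF s G])
  finally show ?thesis
    by simp
qed

lemma Hs_subset_As:
  assumes s: "s > 0" and f: "f \<in> Hs s"
  shows "f \<in> As s"
proof -
  let ?r = "growth s"
  have fL: "f \<in> L2"
    using f by (simp add: Hs_def)
  obtain g where lc: "\<And>n. locally_constant (g n)"
    and cauchy: "\<forall>e>0. \<exists>N. \<forall>m\<ge>N. \<forall>n\<ge>N. Hs_norm s (\<lambda>x. g m x - g n x) < e"
    and conv: "(\<lambda>n. L2norm (\<lambda>x. g n x - f x)) \<longlonglongrightarrow> 0"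
    using f by (auto simp: Hs_def)
  obtain N where N: "\<And>k. k \<ge> N \<Longrightarrow> Hs_norm s (\<lambda>x. g k x - g N x) < 1"
    using cauchy by (meson order_refl zero_less_one)
  obtain level where level: "\<And>k. cyl_const (level k) (g k)"
    using locally_constant_imp_cyl_const[OF lc] by metis
  define C where "C = 4 / (?r - 1) + 4 * (Hs_norm s (g N))^2 / (?r - 1)"
  have "(\<lambda>k. sqnorm (\<lambda>x. f x - g k x)) \<longlonglongrightarrow> 0"
    using tendsto_power[OF conv, of 2] by (simp add: L2norm_eq_sqrt_sqnorm sqnorm_nonneg sqnorm_commute[of f])
  then have lim: "(\<lambda>k. C + 2 * (\<Sum>n<L. ?r^n) * sqnorm (\<lambda>x. f x - g k x)) \<longlonglongrightarrow> C" for L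
    by (auto intro!: tendsto_eq_intros)
  have bound: "(\<Sum>n<L. ?r^n * defect n f) \<le> C" for L
  proof (rule LIMSEQ_le_const[OF lim], intro exI allI impI)
    fix k assume "N \<le> k"
    then show "(\<Sum>n<L. ?r^n * defect n f) \<le> C + 2 * (\<Sum>n<L. ?r^n) * sqnorm (\<lambda>x. f x - g k x)"
      using weighted_defects_le_approximant[OF s fL level[of k] level[of N] less_imp_le[OF N]]
      by (simp add: C_def)
  qed
  have "summable (\<lambda>n. ?r^n * defect n f)"
    using growth_gt_1[OF s] bound[of "Suc _"]
    by (intro bounded_imp_summable[of _ C]) (simp_all add: sqnorm_nonneg lessThan_Suc_atMost)
  then show ?thesis
    using fL by (simp add: As_iff)
qed

theorem propositionB3:
  fixes s :: real
  assumes "s > 0"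
  shows "Hs s = As s"
  using Hs_subset_As[OF assms] As_subset_Hs[OF assms] by blast

end
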